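(* Let $\Sigma$ be a finite alphabet and let $s_1,s_2\in\Sigma^n$ be two related strings of length $n$ (each symbol occurs equally often in both). Let $B=\{b_i : i\in I\}$ be the set of all blocks of length at least two, listed in an arbitrary fixed order $i_0,i_1,\dots,i_{m-1}$ ($m=|I|$), and let $D$ be the decision diagram constructed from the dynamic program described in the context (one node per reachable state on each stage, arcs and weights given by the transition and cost functions, root weight $n$, terminal $\mathbf T$). Then $D$ is an exact decision diagram for the MCSP, i.e. the set of assignments $x\in\{0,1\}^{I\cup\{\lambda\}}$ encoded by the $r$–$\mathbf T$ paths of $D$ equals the set of feasible assignments of the MCSP formulation (those with $x_\lambda=1$ and with $\neg(x_i\wedge x_j)$ for every pair of overlapping blocks $b_i,b_j$), the weight of the path encoding a feasible $x$ equals $n+\sum_{i\in I:\,x_i=1}(1-t_i)$, which is the number of substrings in the common partition of $s_1$ and $s_2$ consisting of the chosen blocks together with single symbols for all uncovered positions, and consequently $\mathrm{Opt}(D)=\mathrm{Opt}(\mathrm{MCSP})$: the minimum-weight $r$–$\mathbf T$ paths encode exactly the optimal feasible assignments, and the minimum path weight equals the minimum size of a common partition of $s_1$ and $s_2$.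
   Context: For a string $s$ of length $n$ and $0\le i<j\le n$, $s[i:j]$ denotes the substring consisting of the symbols at positions $i,\dots,j-1$ (positions indexed from $0$). $1^n$ ($0^n$) denotes the string of $n$ ones (zeros). Minimum Common String Partition (MCSP): for related strings $s_1,s_2$, a solution is a partition of $s_1$ and of $s_2$ into multisets $P_1,P_2$ of non-overlapping consecutive substrings with $P_1=P_2$; its value is $|P_1|=|P_2|$, to be minimized. A block is a triple $b=(k^1,k^2,t)$ with $t\in\{1,\dots,n\}$, $k^1,k^2\in\{0,\dots,n-t\}$ and $s_1[k^1:k^1+t]=s_2[k^2:k^2+t]$. Blocks $b_i=(k_i^1,k_i^2,t_i)$ and $b_j=(k_j^1,k_j^2,t_j)$ overlap if $k_i^1-t_j<k_j^1<k_i^1+t_i$ or $k_i^2-t_j<k_j^2<k_i^2+t_i$. $B$ is the set of blocks with $t\ge2$, indexed by $I$; $\lambda\notin I$ is an extra index. The MCSP formulation has Boolean variables $x_i$, $i\in I\cup\{\lambda\}$, constraints $\neg(x_i\wedge x_j)$ for overlapping $b_i,b_j$, and objective $n+\sum_{i\in I: x_i=1}(1-t_i)$. Dynamic program: states are pairs $(bs^1,bs^2)$ of bitstrings in $\{0,1\}^n$. Stage $0$ contains only the root state $(1^n,1^n)$; the variables are processed in the order $x_{i_0},\dots,x_{i_{m-1}},x_\lambda$, and the final stage contains only the terminal state $(0^n,0^n)$. Transitions from state $(bs^1,bs^2)$ on variable $x_i$: for $i\in I$, $x_i=0$ leads to $(bs^1,bs^2)$ with cost $0$; $x_i=1$ is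 defined only if $bs^c[j]=1$ for all $k_i^c\le j<k_i^c+t_i$ for both $c=1,2$, and then leads to the state obtained by setting these positions to $0$ in $bs^1$ and $bs^2$ respectively, with cost $1-t_i$; for $\lambda$, $x_\lambda=1$ leads to $(0^n,0^n)$ with cost $0$ and $x_\lambda=0$ is undefined. The root value is $n$. Decision diagram $D$: a layered directed acyclic multigraph with layers $L_0,\dots,L_{m+1}$; $L_0=\{r\}$ is the root (root state, weight $n$), layer $L_\ell$ for $\ell\le m$ contains one node per state reachable on stage $\ell$ and is associated with the $\ell$-th variable, and $L_{m+1}=\{\mathbf T\}$. Each defined transition gives an arc labeled by the value of the variable ($0$-arc or $1$-arc) with weight equal to the transition cost. An $r$–$\mathbf T$ path encodes the assignment given by its arc labels; its weight is $n$ plus the sum of its arc weights. $\mathrm{Opt}(D)$ is the set of assignments encoded by minimum-weight $r$–$\mathbf T$ paths, and $\mathrm{Opt}(\mathrm{MCSP})$ the set of feasible assignments of minimum objective value. *)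

theory Defs
  imports Main "HOL-Library.Multiset"
begin

(* Strings are lists; s[k:k+t] = take t (drop k s). Positions are 0-based. *)

type_synonym block = "nat \<times> nat \<times> nat"   (* (k1, k2, t) *)

definition substr :: "'a list \<Rightarrow> nat \<Rightarrow> nat \<Rightarrow> 'a list" where
  "substr s i j = take (j - i) (drop i s)"

definition related :: "'a list \<Rightarrow> 'a list \<Rightarrow> bool" where
  "related s1 s2 \<longleftrightarrow> length s1 = length s2 \<and> mset s1 = mset s2"

definition is_block :: "'a list \<Rightarrow> 'a list \<Rightarrow> block \<Rightarrow> bool" where
  "is_block s1 s2 b = (case b of (k1, k2, t) \<Rightarrow>
     1 \<le> t \<and> t \<le> length s1 \<and> k1 \<le> length s1 - t \<and> k2 \<le> length s1 - t \<and>
     substr s1 k1 (k1 + t) = substr s2 k2 (k2 + t))"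

definition blocks2 :: "'a list \<Rightarrow> 'a list \<Rightarrow> block set" where
  "blocks2 s1 s2 = {b. is_block s1 s2 b \<and> 2 \<le> snd (snd b)}"

definition overlap :: "block \<Rightarrow> block \<Rightarrow> bool" where
  "overlap bi bj = (case bi of (ki1, ki2, ti) \<Rightarrow> case bj of (kj1, kj2, tj) \<Rightarrow>
     (int ki1 - int tj < int kj1 \<and> int kj1 < int ki1 + int ti) \<or>
     (int ki2 - int tj < int kj2 \<and> int kj2 < int ki2 + int ti))"

(* An assignment x \<in> {0,1}^(I \<union> {\<lambda>}) for the block order bl (I = {0..<length bl},
   index i standing for the block bl!i) is a bool list of length (length bl + 1);
   its last entry (index length bl) is x_\<lambda>. *)
definition mcsp_feasible :: "block list \<Rightarrow> bool list \<Rightarrow> bool" where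
  "mcsp_feasible bl x \<longleftrightarrow> length x = length bl + 1 \<and> x ! length bl \<and>
     (\<forall>i < length bl. \<forall>j < length bl. i \<noteq> j \<and> x ! i \<and> x ! j \<longrightarrow> \<not> overlap (bl ! i) (bl ! j))"

definition mcsp_obj :: "nat \<Rightarrow> block list \<Rightarrow> bool list \<Rightarrow> int" where
  "mcsp_obj n bl x = int n + (\<Sum>i \<in> {i. i < length bl \<and> x ! i}. 1 - int (snd (snd (bl ! i))))"

definition Opt_MCSP :: "nat \<Rightarrow> block list \<Rightarrow> bool list set" where
  "Opt_MCSP n bl = {x. mcsp_feasible bl x \<and>
     (\<forall>y. mcsp_feasible bl y \<longrightarrow> mcsp_obj n bl x \<le> mcsp_obj n bl y)}"

definition common_partition :: "'a list \<Rightarrow> 'a list \<Rightarrow> 'a list list \<Rightarrow> 'a list list \<Rightarrow> bool" where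
  "common_partition s1 s2 P1 P2 \<longleftrightarrow> concat P1 = s1 \<and> concat P2 = s2 \<and>
     [] \<notin> set P1 \<and> [] \<notin> set P2 \<and> mset P1 = mset P2"

definition assignment_parts :: "'a list \<Rightarrow> block list \<Rightarrow> bool list \<Rightarrow> 'a list multiset" where
  "assignment_parts s1 bl x =
     mset (map (\<lambda>i. case bl ! i of (k1, k2, t) \<Rightarrow> substr s1 k1 (k1 + t))
               (filter (\<lambda>i. x ! i) [0..<length bl]))
   + mset (map (\<lambda>j. [s1 ! j])
               (filter (\<lambda>j. \<not> (\<exists>i < length bl. x ! i \<and>
                              fst (bl ! i) \<le> j \<and> j < fst (bl ! i) + snd (snd (bl ! i))))
                       [0..<length s1]))"

type_synonym state = "bool list \<times> bool list"

definition root_state :: "nat \<Rightarrow> state" where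
  "root_state n = (replicate n True, replicate n True)"

definition clear :: "nat \<Rightarrow> nat \<Rightarrow> bool list \<Rightarrow> bool list" where
  "clear k t bs = map (\<lambda>j. if k \<le> j \<and> j < k + t then False else bs ! j) [0..<length bs]"

(* transition on a block variable x_i with value v; None = undefined; result (new state, cost) *)
definition block_trans :: "block \<Rightarrow> state \<Rightarrow> bool \<Rightarrow> (state \<times> int) option" where
  "block_trans b st v = (case b of (k1, k2, t) \<Rightarrow> case st of (bs1, bs2) \<Rightarrow>
     if \<not> v then Some ((bs1, bs2), 0)
     else if (\<forall>j. k1 \<le> j \<and> j < k1 + t \<longrightarrow> j < length bs1 \<and> bs1 ! j) \<and>
             (\<forall>j. k2 \<le> j \<and> j < k2 + t \<longrightarrow> j < length bs2 \<and> bs2 ! j)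
     then Some ((clear k1 t bs1, clear k2 t bs2), 1 - int t)
     else None)"

definition lambda_trans :: "nat \<Rightarrow> state \<Rightarrow> bool \<Rightarrow> (state \<times> int) option" where
  "lambda_trans n st v = (if v then Some ((replicate n False, replicate n False), 0) else None)"

fun reach :: "nat \<Rightarrow> block list \<Rightarrow> nat \<Rightarrow> state set" where
  "reach n bl 0 = {root_state n}"
| "reach n bl (Suc l) =
     {st'. \<exists>st \<in> reach n bl l. \<exists>v c. block_trans (bl ! l) st v = Some (st', c)}"

datatype dd_node = Nd nat state | Term

type_synonym dd_arc = "dd_node \<times> bool \<times> int \<times> dd_node"  (* source, label, weight, target *)

definition dd_root :: "nat \<Rightarrow> dd_node" where
  "dd_root n = Nd 0 (root_state n)"

definition dd_arcs :: "nat \<Rightarrow> block list \<Rightarrow> dd_arc set" where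
  "dd_arcs n bl =
     {(Nd l st, v, c, Nd (Suc l) st') | l st v c st'.
        l < length bl \<and> st \<in> reach n bl l \<and> block_trans (bl ! l) st v = Some (st', c)}
   \<union> {(Nd (length bl) st, v, c, Term) | st v c st'.
        st \<in> reach n bl (length bl) \<and> lambda_trans n st v = Some (st', c)}"

definition arc_src :: "dd_arc \<Rightarrow> dd_node" where "arc_src a = fst a"
definition arc_label :: "dd_arc \<Rightarrow> bool" where "arc_label a = fst (snd a)"
definition arc_weight :: "dd_arc \<Rightarrow> int" where "arc_weight a = fst (snd (snd a))"
definition arc_tgt :: "dd_arc \<Rightarrow> dd_node" where "arc_tgt a = snd (snd (snd a))"

definition rT_path :: "nat \<Rightarrow> block list \<Rightarrow> dd_arc list \<Rightarrow> bool" where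
  "rT_path n bl p \<longleftrightarrow> p \<noteq> [] \<and> set p \<subseteq> dd_arcs n bl \<and>
     arc_src (hd p) = dd_root n \<and> arc_tgt (last p) = Term \<and>
     (\<forall>i. Suc i < length p \<longrightarrow> arc_tgt (p ! i) = arc_src (p ! Suc i))"

definition path_assignment :: "dd_arc list \<Rightarrow> bool list" where
  "path_assignment p = map arc_label p"

definition path_weight :: "nat \<Rightarrow> dd_arc list \<Rightarrow> int" where
  "path_weight n p = int n + sum_list (map arc_weight p)"

definition Opt_D :: "nat \<Rightarrow> block list \<Rightarrow> bool list set" where
  "Opt_D n bl = {path_assignment p | p. rT_path n bl p \<and>
     (\<forall>q. rT_path n bl q \<longrightarrow> path_weight n p \<le> path_weight n q)}"

end

theory Submission
  imports Defs "HOL-Combinatorics.Permutations"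
begin

(*
  Along an assignment x the diagram can pass through only one state per layer: after the
  decisions on b_0, ..., b_(l-1) the two bitstrings are 0 exactly at the positions of s1 and
  of s2 covered by the blocks chosen so far.  The transition on x_l = 1 is defined iff b_l
  avoids these positions, i.e. overlaps no block chosen before.  Hence every r-T path is the
  canonical path of a feasible assignment and vice versa, and its weight is
  n plus the sum of 1 - t_i over the chosen blocks.

  Cutting s1 and s2 at the chosen blocks and into single symbols elsewhere gives a common
  partition of that size: the block parts agree by definition of a block, and the leftover
  single symbols agree as multisets because s1 and s2 are related.  Conversely, matching the
  equal parts of a common partition, its parts of length at least two are pairwise
  non-overlapping blocks, and the assignment choosing them has objective value equal to the
  number of parts.  So the path weights are exactly the sizes of common partitions.
*)

section \<open>Blocks as pairs of intervals\<close>

definition blk_len :: "block \<Rightarrow> nat" where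
  "blk_len b = snd (snd b)"

definition occ1 :: "block \<Rightarrow> nat \<times> nat" where
  "occ1 b = (fst b, blk_len b)"

definition occ2 :: "block \<Rightarrow> nat \<times> nat" where
  "occ2 b = (fst (snd b), blk_len b)"

definition interval :: "nat \<times> nat \<Rightarrow> nat set" where
  "interval u = {fst u..<fst u + snd u}"

definition segment :: "'a list \<Rightarrow> nat \<times> nat \<Rightarrow> 'a list" where
  "segment s u = take (snd u) (drop (fst u) s)"

definition block_within :: "nat \<Rightarrow> block \<Rightarrow> bool" where
  "block_within n b \<longleftrightarrow> 0 < blk_len b \<and> fst b + blk_len b \<le> n \<and> fst (snd b) + blk_len b \<le> n"

lemma overlap_sym: "overlap a b \<longleftrightarrow> overlap b a"
  unfolding overlap_def by (auto split: prod.splits)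

lemma not_overlap_iff_disjnt:
  assumes "0 < blk_len a" "0 < blk_len b"
  shows "\<not> overlap a b \<longleftrightarrow>
    disjnt (interval (occ1 a)) (interval (occ1 b)) \<and> disjnt (interval (occ2 a)) (interval (occ2 b))"
  using assms unfolding overlap_def interval_def occ1_def occ2_def blk_len_def disjnt_def
  by (auto split: prod.splits)

lemma is_block_within: "is_block s1 s2 b \<Longrightarrow> block_within (length s1) b"
  unfolding is_block_def block_within_def blk_len_def by (auto split: prod.splits)

lemma is_block_segment: "is_block s1 s2 b \<Longrightarrow> segment s1 (occ1 b) = segment s2 (occ2 b)"
  unfolding is_block_def segment_def substr_def occ1_def occ2_def blk_len_def by (auto split: prod.splits)

section \<open>The state reached along an assignment\<close>

definition free_bits :: "nat \<Rightarrow> nat set \<Rightarrow> bool list" where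
  "free_bits n A = map (\<lambda>j. j \<notin> A) [0..<n]"

definition chosen_cover :: "(block \<Rightarrow> nat \<times> nat) \<Rightarrow> block list \<Rightarrow> bool list \<Rightarrow> nat \<Rightarrow> nat set" where
  "chosen_cover occ bl x l = (\<Union>i\<in>{i. i < l \<and> x ! i}. interval (occ (bl ! i)))"

definition dp_state :: "nat \<Rightarrow> block list \<Rightarrow> bool list \<Rightarrow> nat \<Rightarrow> state" where
  "dp_state n bl x l = (free_bits n (chosen_cover occ1 bl x l), free_bits n (chosen_cover occ2 bl x l))"

definition stage_cost :: "block list \<Rightarrow> bool list \<Rightarrow> nat \<Rightarrow> int" where
  "stage_cost bl x l = (if x ! l then 1 - int (blk_len (bl ! l)) else 0)"

definition compatible_upto :: "block list \<Rightarrow> bool list \<Rightarrow> nat \<Rightarrow> bool" where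
  "compatible_upto bl x l \<longleftrightarrow>
     (\<forall>i<l. \<forall>j<l. i \<noteq> j \<and> x ! i \<and> x ! j \<longrightarrow> \<not> overlap (bl ! i) (bl ! j))"

lemma clear_free_bits: "clear k t (free_bits n A) = free_bits n (A \<union> interval (k, t))"
  unfolding clear_def free_bits_def interval_def by auto

lemma free_bits_all_free:
  "k + t \<le> n \<Longrightarrow>
    (\<forall>j. k \<le> j \<and> j < k + t \<longrightarrow> j < length (free_bits n A) \<and> free_bits n A ! j)
    \<longleftrightarrow> disjnt (interval (k, t)) A"
  unfolding free_bits_def interval_def disjnt_def by auto

lemma block_trans_free_bits:
  assumes "block_within n b"
  shows "block_trans b (free_bits n A1, free_bits n A2) v =
    (if \<not> v then Some ((free_bits n A1, free_bits n A2), 0)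
     else if disjnt (interval (occ1 b)) A1 \<and> disjnt (interval (occ2 b)) A2
     then Some ((free_bits n (A1 \<union> interval (occ1 b)), free_bits n (A2 \<union> interval (occ2 b))),
                1 - int (blk_len b))
     else None)"
proof -
  obtain k1 k2 t where b: "b = (k1, k2, t)" by (cases b)
  then have "k1 + t \<le> n" "k2 + t \<le> n"
    using assms unfolding block_within_def blk_len_def by auto
  then show ?thesis
    unfolding b block_trans_def occ1_def occ2_def blk_len_def
    by (simp add: free_bits_all_free clear_free_bits)
qed

lemma chosen_cover_0: "chosen_cover occ bl x 0 = {}"
  unfolding chosen_cover_def by simp

lemma chosen_cover_Suc:
  "chosen_cover occ bl x (Suc l) =
     chosen_cover occ bl x l \<union> (if x ! l then interval (occ (bl ! l)) else {})"
  unfolding chosen_cover_def by (auto simp: less_Suc_eq)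

lemma disjnt_chosen_cover:
  "disjnt B (chosen_cover occ bl x l) \<longleftrightarrow> (\<forall>i<l. x ! i \<longrightarrow> disjnt B (interval (occ (bl ! i))))"
  unfolding chosen_cover_def disjnt_def by auto

lemma dp_state_0: "dp_state n bl x 0 = root_state n"
  unfolding dp_state_def root_state_def free_bits_def chosen_cover_0 by (simp add: map_replicate_const)

lemma compatible_upto_Suc:
  "compatible_upto bl x (Suc l) \<longleftrightarrow>
     compatible_upto bl x l \<and> \<not> (x ! l \<and> (\<exists>i<l. x ! i \<and> overlap (bl ! i) (bl ! l)))"
  unfolding compatible_upto_def by (auto simp: less_Suc_eq overlap_sym)

lemma compatible_upto_mono: "compatible_upto bl x l \<Longrightarrow> l' \<le> l \<Longrightarrow> compatible_upto bl x l'"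
  unfolding compatible_upto_def by auto

lemma mcsp_feasible_iff_compatible:
  "mcsp_feasible bl x \<longleftrightarrow> length x = length bl + 1 \<and> x ! length bl \<and> compatible_upto bl x (length bl)"
  unfolding mcsp_feasible_def compatible_upto_def by auto

lemma block_trans_dp_state:
  assumes within: "\<forall>b\<in>set bl. block_within n b" and "l < length bl"
    and "compatible_upto bl x l"
  shows "block_trans (bl ! l) (dp_state n bl x l) (x ! l) =
    (if compatible_upto bl x (Suc l) then Some (dp_state n bl x (Suc l), stage_cost bl x l) else None)"
proof (cases "x ! l")
  case False
  then show ?thesis
    using assms unfolding dp_state_def stage_cost_def
    by (simp add: block_trans_free_bits chosen_cover_Suc compatible_upto_Suc)
next
  case True
  have pos: "\<And>i. i < length bl \<Longrightarrow> 0 < blk_len (bl ! i)"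
    using within unfolding block_within_def by auto
  have "overlap (bl ! i) (bl ! l) \<longleftrightarrow>
      \<not> disjnt (interval (occ1 (bl ! l))) (interval (occ1 (bl ! i))) \<or>
      \<not> disjnt (interval (occ2 (bl ! l))) (interval (occ2 (bl ! i)))" if "i < l" for i
    using not_overlap_iff_disjnt[OF pos pos, of i l] that \<open>l < length bl\<close> by (auto simp: disjnt_sym)
  then have "(\<exists>i<l. x ! i \<and> overlap (bl ! i) (bl ! l)) \<longleftrightarrow>
      \<not> (disjnt (interval (occ1 (bl ! l))) (chosen_cover occ1 bl x l) \<and>
         disjnt (interval (occ2 (bl ! l))) (chosen_cover occ2 bl x l))"
    unfolding disjnt_chosen_cover by blast
  then show ?thesis
    using True assms unfolding dp_state_def stage_cost_def
    by (auto simp: block_trans_free_bits chosen_cover_Suc compatible_upto_Suc)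
qed

section \<open>Paths of the decision diagram\<close>

definition dp_arc :: "nat \<Rightarrow> block list \<Rightarrow> bool list \<Rightarrow> nat \<Rightarrow> dd_arc" where
  "dp_arc n bl x l =
     (Nd l (dp_state n bl x l), x ! l, stage_cost bl x l, Nd (Suc l) (dp_state n bl x (Suc l)))"

definition dp_path :: "nat \<Rightarrow> block list \<Rightarrow> bool list \<Rightarrow> dd_arc list" where
  "dp_path n bl x = map (dp_arc n bl x) [0..<length bl]
     @ [(Nd (length bl) (dp_state n bl x (length bl)), True, 0, Term)]"

lemma dp_state_reach:
  assumes "\<forall>b\<in>set bl. block_within n b" "compatible_upto bl x l" "l \<le> length bl"
  shows "dp_state n bl x l \<in> reach n bl l"
  using assms(2,3)
proof (induction l)
  case 0
  then show ?case by (simp add: dp_state_0)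
next
  case (Suc l)
  then have "compatible_upto bl x l" by (auto elim: compatible_upto_mono)
  then show ?case
    using Suc block_trans_dp_state[OF assms(1), of l x] by fastforce
qed

lemma layer_arc_in_dd_arcs:
  "l < length bl \<Longrightarrow> st \<in> reach n bl l \<Longrightarrow> block_trans (bl ! l) st v = Some (st', c)
    \<Longrightarrow> (Nd l st, v, c, Nd (Suc l) st') \<in> dd_arcs n bl"
  unfolding dd_arcs_def by blast

lemma final_arc_in_dd_arcs:
  "st \<in> reach n bl (length bl) \<Longrightarrow> (Nd (length bl) st, True, 0, Term) \<in> dd_arcs n bl"
  unfolding dd_arcs_def lambda_trans_def by (cases st) (auto intro!: exI[of _ True])

lemma dd_arcsE:
  assumes "a \<in> dd_arcs n bl"
  obtains (layer) l st v c st' where "a = (Nd l st, v, c, Nd (Suc l) st')" "l < length bl"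
     "block_trans (bl ! l) st v = Some (st', c)"
  | (final) st where "a = (Nd (length bl) st, True, 0, Term)"
  using assms unfolding dd_arcs_def lambda_trans_def by (auto split: if_splits)

lemma dp_arc_in_dd_arcs:
  assumes "\<forall>b\<in>set bl. block_within n b" "compatible_upto bl x (Suc l)" "l < length bl"
  shows "dp_arc n bl x l \<in> dd_arcs n bl"
proof -
  have "compatible_upto bl x l" using assms(2) by (auto elim: compatible_upto_mono)
  then show ?thesis
    using assms dp_state_reach[OF assms(1)] block_trans_dp_state[OF assms(1)]
    unfolding dp_arc_def by (auto intro!: layer_arc_in_dd_arcs)
qed

lemma path_weight_dp_path: "path_weight n (dp_path n bl x) = mcsp_obj n bl x"
proof -
  have "sum_list (map arc_weight (dp_path n bl x)) = (\<Sum>l<length bl. stage_cost bl x l)"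
    unfolding dp_path_def dp_arc_def arc_weight_def
    by (simp add: comp_def atLeast0LessThan flip: sum_set_upt_conv_sum_list_nat)
  also have "\<dots> = (\<Sum>i\<in>{i. i < length bl \<and> x ! i}. 1 - int (snd (snd (bl ! i))))"
    unfolding stage_cost_def blk_len_def by (simp add: sum.If_cases Collect_conj_eq Int_commute lessThan_def)
  finally show ?thesis
    unfolding path_weight_def mcsp_obj_def by simp
qed

lemma path_assignment_dp_path:
  "mcsp_feasible bl x \<Longrightarrow> path_assignment (dp_path n bl x) = x"
  unfolding mcsp_feasible_def path_assignment_def dp_path_def dp_arc_def arc_label_def
  by (auto intro!: nth_equalityI simp: nth_append less_Suc_eq)

lemma rT_path_dp_path:
  assumes within: "\<forall>b\<in>set bl. block_within n b" and "mcsp_feasible bl x"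
  shows "rT_path n bl (dp_path n bl x)"
proof -
  have compat: "compatible_upto bl x (length bl)"
    using assms(2) by (simp add: mcsp_feasible_iff_compatible)
  have "set (dp_path n bl x) \<subseteq> dd_arcs n bl"
    using dp_arc_in_dd_arcs[OF within] compatible_upto_mono[OF compat]
      final_arc_in_dd_arcs dp_state_reach[OF within compat]
    unfolding dp_path_def by auto
  moreover have "arc_src (hd (dp_path n bl x)) = dd_root n"
    unfolding dp_path_def dp_arc_def arc_src_def dd_root_def
    by (simp add: hd_append hd_map dp_state_0)
  moreover have "arc_tgt (dp_path n bl x ! i) = arc_src (dp_path n bl x ! Suc i)"
    if "Suc i < length (dp_path n bl x)" for i
    using that unfolding dp_path_def dp_arc_def arc_src_def arc_tgt_def
    by (cases "Suc i = length bl") (auto simp: nth_append)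
  ultimately show ?thesis
    unfolding rT_path_def by (simp add: dp_path_def arc_tgt_def)
qed

lemma rT_path_prefix:
  assumes within: "\<forall>b\<in>set bl. block_within n b" and p: "rT_path n bl p" and "l \<le> length bl"
  defines "x \<equiv> path_assignment p"
  shows "l < length p \<and> arc_src (p ! l) = Nd l (dp_state n bl x l) \<and> compatible_upto bl x l
    \<and> take l p = map (dp_arc n bl x) [0..<l]"
  using \<open>l \<le> length bl\<close>
proof (induction l)
  case 0
  then show ?case
    using p unfolding rT_path_def by (auto simp: hd_conv_nth dp_state_0 dd_root_def compatible_upto_def)
next
  case (Suc l)
  then have l: "l < length bl" "l < length p" and src: "arc_src (p ! l) = Nd l (dp_state n bl x l)"
    and compat: "compatible_upto bl x l" and prefix: "take l p = map (dp_arc n bl x) [0..<l]"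
    by auto
  have "p ! l \<in> dd_arcs n bl"
    using p l unfolding rT_path_def by auto
  then obtain c st' where arc: "p ! l = (Nd l (dp_state n bl x l), x ! l, c, Nd (Suc l) st')"
    and trans: "block_trans (bl ! l) (dp_state n bl x l) (x ! l) = Some (st', c)"
    using src l unfolding x_def path_assignment_def
    by (cases rule: dd_arcsE) (auto simp: arc_src_def arc_label_def)
  have compat': "compatible_upto bl x (Suc l)" and "st' = dp_state n bl x (Suc l)" "c = stage_cost bl x l"
    using trans block_trans_dp_state[OF within l(1) compat] by (auto split: if_splits)
  then have arc_l: "p ! l = dp_arc n bl x l"
    using arc unfolding dp_arc_def by simp
  have "Suc l < length p"
  proof (rule ccontr)
    assume "\<not> Suc l < length p"
    then have "length p = Suc l"
      using l by simp
    then have "last p = p ! l"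
      by (cases p rule: rev_cases) auto
    then show False
      using p arc_l unfolding rT_path_def dp_arc_def arc_tgt_def by simp
  qed
  moreover have "arc_src (p ! Suc l) = Nd (Suc l) (dp_state n bl x (Suc l))"
    using p calculation arc_l unfolding rT_path_def dp_arc_def arc_tgt_def by force
  moreover have "take (Suc l) p = map (dp_arc n bl x) [0..<Suc l]"
    using prefix arc_l l by (simp add: take_Suc_conv_app_nth)
  ultimately show ?case
    using compat' by blast
qed

lemma rT_path_eq_dp_path:
  assumes within: "\<forall>b\<in>set bl. block_within n b" and p: "rT_path n bl p"
  shows "mcsp_feasible bl (path_assignment p) \<and> p = dp_path n bl (path_assignment p)"
proof -
  let ?m = "length bl" and ?x = "path_assignment p"
  obtain m_lt: "?m < length p" and src: "arc_src (p ! ?m) = Nd ?m (dp_state n bl ?x ?m)"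
    and compat: "compatible_upto bl ?x ?m" and prefix: "take ?m p = map (dp_arc n bl ?x) [0..<?m]"
    using rT_path_prefix[OF within p order_refl] by blast
  have "p ! ?m \<in> dd_arcs n bl"
    using p m_lt unfolding rT_path_def by auto
  then have final: "p ! ?m = (Nd ?m (dp_state n bl ?x ?m), True, 0, Term)"
    using src by (cases rule: dd_arcsE) (auto simp: arc_src_def)
  have len: "length p = Suc ?m"
  proof (rule ccontr)
    assume "length p \<noteq> Suc ?m"
    then have "Suc ?m < length p"
      using m_lt by simp
    then have "arc_src (p ! Suc ?m) = arc_tgt (p ! ?m)"
      using p unfolding rT_path_def by simp
    then have "arc_src (p ! Suc ?m) = Term"
      using final by (simp add: arc_tgt_def)
    moreover have "p ! Suc ?m \<in> dd_arcs n bl"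
      using p \<open>Suc ?m < length p\<close> unfolding rT_path_def by auto
    ultimately show False
      by (auto elim: dd_arcsE simp: arc_src_def)
  qed
  have "p = take ?m p @ [p ! ?m]"
    using len by (metis lessI take_Suc_conv_app_nth take_all order_refl)
  then have "p = dp_path n bl ?x"
    using prefix final unfolding dp_path_def by simp
  moreover have "length ?x = ?m + 1" "?x ! ?m"
    using len final unfolding path_assignment_def arc_label_def by simp_all
  ultimately show ?thesis
    using compat by (simp add: mcsp_feasible_iff_compatible)
qed

lemma path_assignments_eq_feasible:
  assumes "\<forall>b\<in>set bl. block_within n b"
  shows "path_assignment ` {p. rT_path n bl p} = {x. mcsp_feasible bl x}"
  using rT_path_eq_dp_path[OF assms] rT_path_dp_path[OF assms] path_assignment_dp_path
  by (auto intro!: image_eqI)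

lemma path_weight_eq_mcsp_obj:
  "\<forall>b\<in>set bl. block_within n b \<Longrightarrow> rT_path n bl p
    \<Longrightarrow> path_weight n p = mcsp_obj n bl (path_assignment p)"
  by (metis rT_path_eq_dp_path path_weight_dp_path)

lemma path_weights_eq_objective_values:
  assumes "\<forall>b\<in>set bl. block_within n b"
  shows "{path_weight n p | p. rT_path n bl p} = mcsp_obj n bl ` {x. mcsp_feasible bl x}"
proof -
  have "{path_weight n p | p. rT_path n bl p} = mcsp_obj n bl ` path_assignment ` {p. rT_path n bl p}"
    using path_weight_eq_mcsp_obj[OF assms] by (auto simp: image_def) metis
  then show ?thesis
    unfolding path_assignments_eq_feasible[OF assms] .
qed

lemma Collect_argmin_image:
  assumes "f ` P = F" "\<forall>p\<in>P. w p = c (f p)"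
  shows "{f p | p. p \<in> P \<and> (\<forall>q\<in>P. w p \<le> w q)} = {x \<in> F. \<forall>y\<in>F. c x \<le> c y}"
  using assms by auto

lemma Opt_D_eq_Opt_MCSP:
  assumes "\<forall>b\<in>set bl. block_within n b"
  shows "Opt_D n bl = Opt_MCSP n bl"
  using Collect_argmin_image[OF path_assignments_eq_feasible[OF assms], of "path_weight n" "mcsp_obj n bl"]
    path_weight_eq_mcsp_obj[OF assms]
  unfolding Opt_D_def Opt_MCSP_def by simp

section \<open>Cutting a string along disjoint intervals\<close>

lemma int_length_eq_length_concat:
  "int (length P) = int (length (concat P)) + (\<Sum>p\<leftarrow>P. 1 - int (length p))"
  by (induction P) auto

lemma length_le_length_concat: "[] \<notin> set P \<Longrightarrow> length P \<le> length (concat P)"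
  using int_length_eq_length_concat[of P] sum_list_nonpos[of "map (\<lambda>p. 1 - int (length p)) P"]
  by (fastforce simp: Suc_le_eq)

definition interval_parts :: "'a list \<Rightarrow> (nat \<times> nat) list \<Rightarrow> 'a list multiset" where
  "interval_parts s I = mset (map (segment s) I)
     + mset (map (\<lambda>j. [s ! j]) (filter (\<lambda>j. j \<notin> \<Union> (interval ` set I)) [0..<length s]))"

lemma segment_take: "fst u + snd u \<le> k \<Longrightarrow> segment (take k s) u = segment s u"
  unfolding segment_def by (simp add: drop_take min_def)

lemma interval_parts_take:
  assumes "\<forall>u\<in>set I. fst u + snd u \<le> k" "k \<le> length s"
  shows "interval_parts (take k s) I = mset (map (segment s) I)
     + mset (map (\<lambda>j. [s ! j]) (filter (\<lambda>j. j \<notin> \<Union> (interval ` set I)) [0..<k]))"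
proof -
  have "map (segment (take k s)) I = map (segment s) I"
    using assms(1) by (simp add: segment_take)
  moreover have "map (\<lambda>j. [take k s ! j]) (filter P [0..<k]) = map (\<lambda>j. [s ! j]) (filter P [0..<k])" for P
    by simp
  moreover have "length (take k s) = k"
    using assms(2) by simp
  ultimately show ?thesis
    unfolding interval_parts_def by presburger
qed

lemma interval_parts_snoc_uncovered:
  assumes "length s = Suc k" "k \<notin> \<Union> (interval ` set I)" "\<forall>u\<in>set I. fst u + snd u \<le> k"
  shows "interval_parts s I = interval_parts (take k s) I + {#[s ! k]#}"
proof -
  let ?P = "\<lambda>j. j \<notin> \<Union> (interval ` set I)"
  have "filter ?P [0..<length s] = filter ?P [0..<k] @ [k]"
    using assms(1,2) by simp
  then have "interval_parts s I
      = mset (map (segment s) I) + mset (map (\<lambda>j. [s ! j]) (filter ?P [0..<k] @ [k]))"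
    unfolding interval_parts_def by simp
  also have "\<dots> = interval_parts (take k s) I + {#[s ! k]#}"
    using assms(1) by (simp add: interval_parts_take[OF assms(3)])
  finally show ?thesis .
qed

lemma interval_parts_snoc_interval:
  assumes "distinct I" "(k, t) \<in> set I" "length s = k + t"
    and "\<forall>u\<in>set (remove1 (k, t) I). fst u + snd u \<le> k"
  shows "interval_parts s I = interval_parts (take k s) (remove1 (k, t) I) + {#drop k s#}"
proof -
  let ?I' = "remove1 (k, t) I"
  let ?P = "\<lambda>j. j \<notin> \<Union> (interval ` set I)" and ?P' = "\<lambda>j. j \<notin> \<Union> (interval ` set ?I')"
  have set_I: "set I = insert (k, t) (set ?I')"
    using assms(1,2) by auto
  have "filter ?P [0..<length s] = filter ?P' [0..<k]"
  proof -
    have "[0..<length s] = [0..<k] @ [k..<k + t]"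
      using assms(3) upt_add_eq_append[of 0 k t] by simp
    moreover have "filter ?P [k..<k + t] = []"
      using assms(2) by (auto simp: filter_empty_conv interval_def intro!: bexI[OF _ assms(2)])
    moreover have "filter ?P [0..<k] = filter ?P' [0..<k]"
      unfolding set_I by (rule filter_cong) (auto simp: interval_def)
    ultimately show ?thesis
      by simp
  qed
  moreover have "mset (map (segment s) I) = mset (map (segment s) ?I') + {#drop k s#}"
  proof -
    have "mset I = add_mset (k, t) (mset ?I')"
      using assms(2) by simp
    moreover have "segment s (k, t) = drop k s"
      using assms(3) by (simp add: segment_def)
    ultimately show ?thesis
      by (metis add_mset_add_single image_mset_add_mset mset_map)
  qed
  ultimately have "interval_parts s I
      = mset (map (segment s) ?I') + {#drop k s#} + mset (map (\<lambda>j. [s ! j]) (filter ?P' [0..<k]))"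
    unfolding interval_parts_def by simp
  also have "\<dots> = interval_parts (take k s) ?I' + {#drop k s#}"
    using assms(3) by (simp add: interval_parts_take[OF assms(4)])
  finally show ?thesis .
qed

definition disjoint_intervals :: "nat \<Rightarrow> (nat \<times> nat) list \<Rightarrow> bool" where
  "disjoint_intervals n I \<longleftrightarrow> distinct I \<and> (\<forall>u\<in>set I. 0 < snd u \<and> fst u + snd u \<le> n)
     \<and> pairwise (\<lambda>u v. disjnt (interval u) (interval v)) (set I)"

lemma disjoint_intervals_uncovered_last:
  assumes "disjoint_intervals (Suc k) I" "k \<notin> \<Union> (interval ` set I)"
  shows "disjoint_intervals k I"
  using assms unfolding disjoint_intervals_def by (force simp: interval_def)

lemma disjoint_intervals_remove_last:
  assumes "disjoint_intervals (k + t) I" "(k, t) \<in> set I"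
  shows "disjoint_intervals k (remove1 (k, t) I)"
proof -
  have "fst u + snd u \<le> k" if "u \<in> set I - {(k, t)}" for u
  proof -
    have "disjnt (interval u) (interval (k, t))" "0 < snd u" "fst u + snd u \<le> k + t"
      using that assms unfolding disjoint_intervals_def pairwise_def by auto
    moreover from this have "fst u + snd u - 1 \<in> interval u"
      by (simp add: interval_def)
    ultimately show ?thesis
      unfolding disjnt_def interval_def by auto
  qed
  then show ?thesis
    using assms unfolding disjoint_intervals_def pairwise_def by auto
qed

lemma partition_into_interval_parts:
  "disjoint_intervals (length s) I \<Longrightarrow> \<exists>P. concat P = s \<and> [] \<notin> set P \<and> mset P = interval_parts s I"
proof (induction "length s" arbitrary: s I rule: less_induct)
  case less
  show ?case
  proof (cases "length s")
    case 0
    then have "I = []"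
      using less.prems by (cases I) (auto simp: disjoint_intervals_def)
    then show ?thesis
      using 0 by (simp add: interval_parts_def)
  next
    case (Suc k)
    show ?thesis
    proof (cases "k \<in> \<Union> (interval ` set I)")
      case False
      then have I: "disjoint_intervals k I"
        using disjoint_intervals_uncovered_last less.prems Suc by metis
      then obtain P where "concat P = take k s" "[] \<notin> set P" "mset P = interval_parts (take k s) I"
        using less.hyps[of "take k s" I] Suc by auto
      moreover have "s = take k s @ [s ! k]"
        using Suc by (metis lessI take_Suc_conv_app_nth take_all order_refl)
      ultimately show ?thesis
        using interval_parts_snoc_uncovered[OF Suc False] I unfolding disjoint_intervals_def
        by (intro exI[of _ "P @ [[s ! k]]"]) auto
    next
      case True
      then obtain k0 t where kt: "(k0, t) \<in> set I" "k0 \<le> k" "k < k0 + t"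
        by (auto simp: interval_def)
      then have end_kt: "length s = k0 + t"
        using less.prems Suc unfolding disjoint_intervals_def by fastforce
      then have I': "disjoint_intervals k0 (remove1 (k0, t) I)"
        using disjoint_intervals_remove_last less.prems kt(1) by metis
      then obtain P where "concat P = take k0 s" "[] \<notin> set P"
        "mset P = interval_parts (take k0 s) (remove1 (k0, t) I)"
        using less.hyps[of "take k0 s" "remove1 (k0, t) I"] kt end_kt by auto
      moreover have "drop k0 s \<noteq> []"
        using kt end_kt by simp
      ultimately show ?thesis
        using interval_parts_snoc_interval[OF _ kt(1) end_kt] less.prems I'
        unfolding disjoint_intervals_def by (intro exI[of _ "P @ [drop k0 s]"]) auto
    qed
  qed
qed

lemma length_partition_interval_parts:
  assumes "concat P = s" "mset P = interval_parts s I" "\<forall>u\<in>set I. fst u + snd u \<le> length s"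
  shows "int (length P) = int (length s) + (\<Sum>u\<leftarrow>I. 1 - int (snd u))"
proof -
  have "(\<Sum>p\<leftarrow>P. 1 - int (length p)) = (\<Sum>p\<in>#mset P. 1 - int (length p))"
    by (metis mset_map sum_mset_sum_list)
  also have "\<dots> = (\<Sum>u\<in>#mset I. 1 - int (length (segment s u)))"
    unfolding assms(2) interval_parts_def by (simp add: image_mset.compositionality comp_def)
  also have "\<dots> = (\<Sum>u\<leftarrow>I. 1 - int (length (segment s u)))"
    by (metis mset_map sum_mset_sum_list)
  also have "\<dots> = (\<Sum>u\<leftarrow>I. 1 - int (snd u))"
    using assms(3) by (intro arg_cong[where f = sum_list] map_cong) (auto simp: segment_def)
  finally show ?thesis
    using int_length_eq_length_concat[of P] assms(1) by simp
qed

lemma mset_parts_eq_if_common_segments: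
  assumes "concat P = s" "concat Q = t" "mset s = mset t"
    and "mset P = A + mset (map (\<lambda>j. [s ! j]) F)" "mset Q = A + mset (map (\<lambda>j. [t ! j]) G)"
  shows "mset P = mset Q"
proof -
  have mset_concat_parts: "mset (concat R) = (\<Sum>r\<in>#mset R. mset r)" for R :: "'a list list"
    by (metis mset_concat mset_map sum_mset_sum_list)
  have "mset s = (\<Sum>a\<in>#A. mset a) + mset (map (nth s) F)"
    using mset_concat_parts[of P] by (simp add: assms(1,4) image_mset.compositionality comp_def)
  moreover have "mset t = (\<Sum>a\<in>#A. mset a) + mset (map (nth t) G)"
    using mset_concat_parts[of Q] by (simp add: assms(2,5) image_mset.compositionality comp_def)
  ultimately have "image_mset (nth s) (mset F) = image_mset (nth t) (mset G)"
    using assms(3) by simp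
  moreover have "mset (map (\<lambda>j. [r ! j]) H) = image_mset (\<lambda>c. [c]) (image_mset (nth r) (mset H))"
    for r :: "'a list" and H
    by (simp add: image_mset.compositionality comp_def)
  ultimately show ?thesis
    using assms(4,5) by simp
qed

section \<open>Common partitions from feasible assignments\<close>

definition chosen :: "block list \<Rightarrow> bool list \<Rightarrow> nat list" where
  "chosen bl x = filter (\<lambda>i. x ! i) [0..<length bl]"

lemma assignment_parts_eq_interval_parts:
  "assignment_parts s bl x = interval_parts s (map (\<lambda>i. occ1 (bl ! i)) (chosen bl x))"
proof -
  have segments: "map (\<lambda>i. case bl ! i of (k1, k2, t) \<Rightarrow> substr s k1 (k1 + t)) (chosen bl x)
      = map (segment s) (map (\<lambda>i. occ1 (bl ! i)) (chosen bl x))"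
    by (auto simp: segment_def substr_def occ1_def blk_len_def split: prod.splits)
  have covered: "(\<exists>i < length bl. x ! i \<and> fst (bl ! i) \<le> j \<and> j < fst (bl ! i) + snd (snd (bl ! i)))
      \<longleftrightarrow> j \<in> \<Union> (interval ` set (map (\<lambda>i. occ1 (bl ! i)) (chosen bl x)))" for j
    by (auto simp: chosen_def interval_def occ1_def blk_len_def)
  show ?thesis
    unfolding assignment_parts_def interval_parts_def chosen_def[symmetric] segments covered ..
qed

lemma mcsp_obj_eq_sum_chosen:
  "mcsp_obj n bl x = int n + (\<Sum>i\<leftarrow>chosen bl x. 1 - int (blk_len (bl ! i)))"
proof -
  have "{i. i < length bl \<and> x ! i} = set (chosen bl x)"
    by (auto simp: chosen_def)
  then show ?thesis
    unfolding mcsp_obj_def blk_len_def by (simp add: sum_list_distinct_conv_sum_set chosen_def)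
qed

lemma disjoint_intervals_map:
  assumes "distinct xs" "\<forall>i\<in>set xs. 0 < snd (f i) \<and> fst (f i) + snd (f i) \<le> n"
    and "\<forall>i\<in>set xs. \<forall>j\<in>set xs. i \<noteq> j \<longrightarrow> disjnt (interval (f i)) (interval (f j))"
  shows "disjoint_intervals n (map f xs)"
proof -
  have "fst (f i) \<in> interval (f i)" if "i \<in> set xs" for i
    using assms(2) that by (simp add: interval_def)
  then have "inj_on f (set xs)"
    using assms(3) by (metis disjnt_iff inj_onI)
  then show ?thesis
    using assms unfolding disjoint_intervals_def by (auto simp: distinct_map pairwise_def)
qed

lemma chosen_disjoint_intervals:
  assumes "\<forall>b\<in>set bl. block_within n b" "mcsp_feasible bl x"
  shows "disjoint_intervals n (map (\<lambda>i. occ1 (bl ! i)) (chosen bl x))"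
    and "disjoint_intervals n (map (\<lambda>i. occ2 (bl ! i)) (chosen bl x))"
proof -
  have within: "block_within n (bl ! i)" if "i \<in> set (chosen bl x)" for i
    using that assms(1) by (auto simp: chosen_def)
  have "\<not> overlap (bl ! i) (bl ! j)" if "i \<in> set (chosen bl x)" "j \<in> set (chosen bl x)" "i \<noteq> j" for i j
    using that assms(2) unfolding mcsp_feasible_def chosen_def by auto
  then have "disjnt (interval (occ1 (bl ! i))) (interval (occ1 (bl ! j)))
      \<and> disjnt (interval (occ2 (bl ! i))) (interval (occ2 (bl ! j)))"
    if "i \<in> set (chosen bl x)" "j \<in> set (chosen bl x)" "i \<noteq> j" for i j
    using that within not_overlap_iff_disjnt unfolding block_within_def by blast
  moreover have "distinct (chosen bl x)"
    by (simp add: chosen_def)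
  ultimately show "disjoint_intervals n (map (\<lambda>i. occ1 (bl ! i)) (chosen bl x))"
    and "disjoint_intervals n (map (\<lambda>i. occ2 (bl ! i)) (chosen bl x))"
    using within by (auto intro!: disjoint_intervals_map simp: block_within_def occ1_def occ2_def)
qed

lemma common_partition_of_feasible:
  assumes "length s1 = n" "length s2 = n" "mset s1 = mset s2"
    and blocks: "\<forall>b\<in>set bl. is_block s1 s2 b" and feasible: "mcsp_feasible bl x"
  shows "\<exists>P1 P2. common_partition s1 s2 P1 P2 \<and> mset P1 = assignment_parts s1 bl x
           \<and> int (length P1) = mcsp_obj n bl x"
proof -
  let ?I1 = "map (\<lambda>i. occ1 (bl ! i)) (chosen bl x)" and ?I2 = "map (\<lambda>i. occ2 (bl ! i)) (chosen bl x)"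
  have "\<forall>b\<in>set bl. block_within n b"
    using blocks is_block_within assms(1) by blast
  note I = chosen_disjoint_intervals[OF this feasible]
  obtain P1 where P1: "concat P1 = s1" "[] \<notin> set P1" "mset P1 = interval_parts s1 ?I1"
    using partition_into_interval_parts I(1) assms(1) by metis
  obtain P2 where P2: "concat P2 = s2" "[] \<notin> set P2" "mset P2 = interval_parts s2 ?I2"
    using partition_into_interval_parts I(2) assms(2) by metis
  have same_segments: "map (segment s1) ?I1 = map (segment s2) ?I2"
    using blocks by (simp add: is_block_segment chosen_def)
  have "mset P1 = mset P2"
    using mset_parts_eq_if_common_segments[OF P1(1) P2(1) assms(3)
        P1(3)[unfolded interval_parts_def] P2(3)[unfolded interval_parts_def, folded same_segments]] .
  moreover have "int (length P1) = mcsp_obj n bl x"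
    using length_partition_interval_parts[OF P1(1,3)] I(1) assms(1)
    by (simp add: disjoint_intervals_def mcsp_obj_eq_sum_chosen occ1_def comp_def)
  ultimately show ?thesis
    using P1 P2 assignment_parts_eq_interval_parts unfolding common_partition_def by metis
qed

section \<open>Feasible assignments from common partitions\<close>

definition part_start :: "'a list list \<Rightarrow> nat \<Rightarrow> nat" where
  "part_start P a = length (concat (take a P))"

lemma segment_part:
  assumes "a < length P"
  shows "segment (concat P) (part_start P a, length (P ! a)) = P ! a"
    and "part_start P a + length (P ! a) \<le> length (concat P)"
proof -
  have split: "concat P = concat (take a P) @ P ! a @ concat (drop (Suc a) P)"
    using assms by (metis append_take_drop_id concat_append Cons_nth_drop_Suc concat.simps(2))
  show "segment (concat P) (part_start P a, length (P ! a)) = P ! a"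
    unfolding segment_def part_start_def by (subst split) simp
  show "part_start P a + length (P ! a) \<le> length (concat P)"
    unfolding part_start_def by (subst split) simp
qed

lemma part_start_mono: "a \<le> b \<Longrightarrow> part_start P a \<le> part_start P b"
  unfolding part_start_def by (metis append_take_drop_id concat_append le_add1 length_append min.absorb1 take_take)

lemma disjnt_part_intervals:
  assumes "a < length P" "b < length P" "a \<noteq> b"
  shows "disjnt (interval (part_start P a, length (P ! a))) (interval (part_start P b, length (P ! b)))"
proof -
  have "part_start P (Suc c) = part_start P c + length (P ! c)" if "c < length P" for c
    using that unfolding part_start_def by (simp add: take_Suc_conv_app_nth)
  moreover have "part_start P (Suc a) \<le> part_start P b \<or> part_start P (Suc b) \<le> part_start P a"
    using assms(3) by (metis not_less_eq_eq part_start_mono nat_neq_iff Suc_leI)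
  ultimately show ?thesis
    using assms(1,2) unfolding disjnt_def interval_def by auto
qed

lemma length_concat_eq_if_mset_eq: "mset P = mset Q \<Longrightarrow> length (concat P) = length (concat Q)"
  by (metis length_concat mset_map sum_mset_sum_list)

lemma sum_list_one_minus_length:
  assumes "[] \<notin> set P"
  shows "(\<Sum>p\<leftarrow>P. 1 - int (length p))
    = (\<Sum>a\<in>{a. a < length P \<and> 2 \<le> length (P ! a)}. 1 - int (length (P ! a)))"
proof -
  have "(\<Sum>p\<leftarrow>P. 1 - int (length p)) = (\<Sum>a<length P. 1 - int (length (P ! a)))"
    by (simp add: sum_list_sum_nth atLeast0LessThan)
  also have "\<dots> = (\<Sum>a\<in>{a. a < length P \<and> 2 \<le> length (P ! a)}. 1 - int (length (P ! a)))"
  proof (rule sum.mono_neutral_right)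
    show "\<forall>a\<in>{..<length P} - {a. a < length P \<and> 2 \<le> length (P ! a)}. 1 - int (length (P ! a)) = 0"
    proof
      fix a assume "a \<in> {..<length P} - {a. a < length P \<and> 2 \<le> length (P ! a)}"
      then have "a < length P" "\<not> 2 \<le> length (P ! a)"
        by auto
      moreover from this have "P ! a \<noteq> []"
        using assms nth_mem by metis
      ultimately show "1 - int (length (P ! a)) = 0"
        by (cases "P ! a") (auto simp: Suc_le_eq)
    qed
  qed auto
  finally show ?thesis .
qed

definition part_matching :: "'a list list \<Rightarrow> 'a list list \<Rightarrow> (nat \<Rightarrow> nat) \<Rightarrow> bool" where
  "part_matching P Q \<pi> \<longleftrightarrow> inj_on \<pi> {..<length P} \<and> (\<forall>a<length P. \<pi> a < length Q \<and> Q ! \<pi> a = P ! a)"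

lemma part_matching_exists:
  assumes "mset P = mset Q"
  obtains \<pi> where "part_matching P Q \<pi>"
proof -
  obtain \<pi> where \<pi>: "\<pi> permutes {..<length Q}" "permute_list \<pi> Q = P"
    using assms mset_eq_permutation by metis
  then have "length Q = length P"
    by auto
  then have "part_matching P Q \<pi>"
    using \<pi> permutes_in_image[OF \<pi>(1)] permute_list_nth[OF \<pi>(1)] permutes_inj_on[OF \<pi>(1)]
    unfolding part_matching_def by auto
  then show ?thesis
    using that by blast
qed

definition matched_block :: "'a list list \<Rightarrow> 'a list list \<Rightarrow> (nat \<Rightarrow> nat) \<Rightarrow> nat \<Rightarrow> block" where
  "matched_block P Q \<pi> a = (part_start P a, part_start Q (\<pi> a), length (P ! a))"

lemma matched_block_in_blocks2:
  assumes "part_matching P Q \<pi>" "a < length P" "2 \<le> length (P ! a)"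
    and "length (concat Q) = length (concat P)"
  shows "matched_block P Q \<pi> a \<in> blocks2 (concat P) (concat Q)"
  using segment_part[of a P] segment_part[of "\<pi> a" Q] assms
  unfolding part_matching_def blocks2_def is_block_def matched_block_def segment_def substr_def
  by auto

lemma disjnt_matched_blocks:
  assumes "part_matching P Q \<pi>" "a < length P" "b < length P" "a \<noteq> b"
  shows "disjnt (interval (occ1 (matched_block P Q \<pi> a))) (interval (occ1 (matched_block P Q \<pi> b)))
    \<and> disjnt (interval (occ2 (matched_block P Q \<pi> a))) (interval (occ2 (matched_block P Q \<pi> b)))"
proof -
  have "\<pi> a \<noteq> \<pi> b" "\<pi> a < length Q" "\<pi> b < length Q" "Q ! \<pi> a = P ! a" "Q ! \<pi> b = P ! b"
    using assms unfolding part_matching_def by (auto dest: inj_onD)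
  then show ?thesis
    using assms(2-4) disjnt_part_intervals[of a P b] disjnt_part_intervals[of "\<pi> a" Q "\<pi> b"]
    unfolding matched_block_def occ1_def occ2_def blk_len_def by auto
qed

lemma nonoverlapping_blocks_of_common_partition:
  assumes "common_partition s1 s2 P1 P2"
  shows "\<exists>B \<subseteq> blocks2 s1 s2. pairwise (\<lambda>a b. \<not> overlap a b) B
           \<and> int (length P1) = int (length s1) + (\<Sum>b\<in>B. 1 - int (blk_len b))"
proof -
  have concat: "concat P1 = s1" "concat P2 = s2" and nonempty: "[] \<notin> set P1"
    and mset_eq: "mset P1 = mset P2"
    using assms unfolding common_partition_def by auto
  obtain \<pi> where \<pi>: "part_matching P1 P2 \<pi>"
    using part_matching_exists[OF mset_eq] .
  let ?\<beta> = "matched_block P1 P2 \<pi>"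
  define A where "A = {a. a < length P1 \<and> 2 \<le> length (P1 ! a)}"
  have len: "blk_len (?\<beta> a) = length (P1 ! a)" for a
    by (simp add: matched_block_def blk_len_def)
  have "?\<beta> ` A \<subseteq> blocks2 s1 s2"
    using matched_block_in_blocks2[OF \<pi>] length_concat_eq_if_mset_eq[OF mset_eq] concat
    unfolding A_def by auto
  moreover have "pairwise (\<lambda>a b. \<not> overlap a b) (?\<beta> ` A)"
  proof (rule pairwise_imageI)
    fix a b assume ab: "a \<in> A" "b \<in> A" "a \<noteq> b"
    then have "0 < blk_len (?\<beta> a)" "0 < blk_len (?\<beta> b)"
      unfolding len A_def by auto
    then show "\<not> overlap (?\<beta> a) (?\<beta> b)"
      using disjnt_matched_blocks[OF \<pi>, of a b] ab not_overlap_iff_disjnt unfolding A_def by simp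
  qed
  moreover have "inj_on ?\<beta> A"
  proof (rule inj_onI, rule ccontr)
    fix a b assume "a \<in> A" "b \<in> A" "?\<beta> a = ?\<beta> b" "a \<noteq> b"
    then show False
      using disjnt_part_intervals[of a P1 b] unfolding A_def matched_block_def disjnt_def interval_def
      by (auto simp: Int_absorb)
  qed
  then have "(\<Sum>b\<in>?\<beta> ` A. 1 - int (blk_len b)) = (\<Sum>a\<in>A. 1 - int (length (P1 ! a)))"
    by (simp add: sum.reindex len)
  then have "int (length P1) = int (length s1) + (\<Sum>b\<in>?\<beta> ` A. 1 - int (blk_len b))"
    using int_length_eq_length_concat[of P1] sum_list_one_minus_length[OF nonempty] concat
    unfolding A_def by simp
  ultimately show ?thesis
    by blast
qed

lemma feasible_indicator_assignment:
  assumes "distinct bl" "B \<subseteq> set bl" "pairwise (\<lambda>a b. \<not> overlap a b) B"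
  defines "x \<equiv> map (\<lambda>b. b \<in> B) bl @ [True]"
  shows "mcsp_feasible bl x \<and> mcsp_obj n bl x = int n + (\<Sum>b\<in>B. 1 - int (blk_len b))"
proof -
  have x: "x ! i \<longleftrightarrow> bl ! i \<in> B" if "i < length bl" for i
    using that by (simp add: x_def nth_append)
  have "mcsp_feasible bl x"
    using assms(1,3) unfolding mcsp_feasible_def pairwise_def
    by (auto simp: x x_def nth_append nth_eq_iff_index_eq)
  moreover have bij: "bij_betw (nth bl) {i. i < length bl \<and> x ! i} B"
  proof (rule bij_betw_imageI)
    show "inj_on (nth bl) {i. i < length bl \<and> x ! i}"
      using assms(1) by (auto intro: inj_onI simp: nth_eq_iff_index_eq)
    show "nth bl ` {i. i < length bl \<and> x ! i} = B"
    proof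
      show "nth bl ` {i. i < length bl \<and> x ! i} \<subseteq> B"
        using x by auto
      show "B \<subseteq> nth bl ` {i. i < length bl \<and> x ! i}"
      proof
        fix b assume "b \<in> B"
        then obtain i where "i < length bl" "bl ! i = b"
          using assms(2) by (metis in_mono in_set_conv_nth)
        then show "b \<in> nth bl ` {i. i < length bl \<and> x ! i}"
          using x \<open>b \<in> B\<close> by auto
      qed
    qed
  qed
  ultimately show ?thesis
    using sum.reindex_bij_betw[OF bij, of "\<lambda>b. 1 - int (blk_len b)"]
    unfolding mcsp_obj_def blk_len_def by simp
qed

lemma feasible_of_common_partition:
  assumes "distinct bl" "set bl = blocks2 s1 s2" "length s1 = n" "common_partition s1 s2 P1 P2"
  shows "\<exists>x. mcsp_feasible bl x \<and> mcsp_obj n bl x = int (length P1)"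
proof -
  obtain B where "B \<subseteq> set bl" "pairwise (\<lambda>a b. \<not> overlap a b) B"
    and "int (length P1) = int n + (\<Sum>b\<in>B. 1 - int (blk_len b))"
    using nonoverlapping_blocks_of_common_partition[OF assms(4)] assms(2,3) by auto
  then show ?thesis
    using feasible_indicator_assignment[OF assms(1)] by metis
qed

section \<open>Optimal values\<close>

lemma objective_values_eq_partition_sizes:
  assumes "length s1 = n" "length s2 = n" "mset s1 = mset s2"
    and "distinct bl" "set bl = blocks2 s1 s2"
  shows "mcsp_obj n bl ` {x. mcsp_feasible bl x} = int ` {length P1 | P1 P2. common_partition s1 s2 P1 P2}"
proof
  have "\<forall>b\<in>set bl. is_block s1 s2 b"
    using assms(5) by (simp add: blocks2_def)
  note partitions = common_partition_of_feasible[OF assms(1-3) this]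
  show "mcsp_obj n bl ` {x. mcsp_feasible bl x} \<subseteq> int ` {length P1 | P1 P2. common_partition s1 s2 P1 P2}"
  proof (rule image_subsetI)
    fix x assume "x \<in> {x. mcsp_feasible bl x}"
    then obtain P1 P2 where "common_partition s1 s2 P1 P2" "int (length P1) = mcsp_obj n bl x"
      using partitions by blast
    then show "mcsp_obj n bl x \<in> int ` {length P1 | P1 P2. common_partition s1 s2 P1 P2}"
      by force
  qed
  show "int ` {length P1 | P1 P2. common_partition s1 s2 P1 P2} \<subseteq> mcsp_obj n bl ` {x. mcsp_feasible bl x}"
  proof
    fix k assume "k \<in> int ` {length P1 | P1 P2. common_partition s1 s2 P1 P2}"
    then obtain P1 P2 where "common_partition s1 s2 P1 P2" "k = int (length P1)"
      by blast
    then show "k \<in> mcsp_obj n bl ` {x. mcsp_feasible bl x}"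
      using feasible_of_common_partition[OF assms(4,5,1)] by (metis image_eqI mem_Collect_eq)
  qed
qed

lemma partition_sizes_finite_nonempty:
  assumes "mset s1 = mset s2"
  shows "finite {length P1 | P1 P2. common_partition s1 s2 P1 P2}"
    and "{length P1 | P1 P2. common_partition s1 s2 P1 P2} \<noteq> {}"
proof -
  have "{length P1 | P1 P2. common_partition s1 s2 P1 P2} \<subseteq> {..length s1}"
    using length_le_length_concat unfolding common_partition_def by fastforce
  then show "finite {length P1 | P1 P2. common_partition s1 s2 P1 P2}"
    by (rule finite_subset) simp
  have "common_partition s1 s2 (map (\<lambda>c. [c]) s1) (map (\<lambda>c. [c]) s2)"
    using assms unfolding common_partition_def by (auto simp: concat_map_singleton)
  then show "{length P1 | P1 P2. common_partition s1 s2 P1 P2} \<noteq> {}"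
    by blast
qed

theorem mainTheorem1:
  fixes s1 s2 :: "'a list" and n :: nat and bl :: "block list"
  assumes "length s1 = n" and "length s2 = n" and "related s1 s2"
    and "distinct bl" and "set bl = blocks2 s1 s2"
  shows "{path_assignment p | p. rT_path n bl p} = {x. mcsp_feasible bl x}
    \<and> (\<forall>p. rT_path n bl p \<longrightarrow> path_weight n p = mcsp_obj n bl (path_assignment p))
    \<and> (\<forall>x. mcsp_feasible bl x \<longrightarrow>
          (\<exists>P1 P2. common_partition s1 s2 P1 P2 \<and> mset P1 = assignment_parts s1 bl x
                   \<and> int (length P1) = mcsp_obj n bl x))
    \<and> Opt_D n bl = Opt_MCSP n bl
    \<and> Min {path_weight n p | p. rT_path n bl p}
        = int (Min {length P1 | P1 P2. common_partition s1 s2 P1 P2})"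
proof -
  have blocks: "\<forall>b\<in>set bl. is_block s1 s2 b"
    using assms(5) by (simp add: blocks2_def)
  then have within: "\<forall>b\<in>set bl. block_within n b"
    using is_block_within assms(1) by blast
  have mset_eq: "mset s1 = mset s2"
    using assms(3) by (simp add: related_def)
  have "Min {path_weight n p | p. rT_path n bl p}
      = Min (int ` {length P1 | P1 P2. common_partition s1 s2 P1 P2})"
    unfolding path_weights_eq_objective_values[OF within]
      objective_values_eq_partition_sizes[OF assms(1,2) mset_eq assms(4,5)] ..
  also have "\<dots> = int (Min {length P1 | P1 P2. common_partition s1 s2 P1 P2})"
    using partition_sizes_finite_nonempty[OF mset_eq] by (simp add: mono_Min_commute mono_def)
  finally show ?thesis
    using path_assignments_eq_feasible[OF within] path_weight_eq_mcsp_obj[OF within]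
      common_partition_of_feasible[OF assms(1,2) mset_eq blocks] Opt_D_eq_Opt_MCSP[OF within]
    by (auto simp: setcompr_eq_image)
qed

end
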